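(* Let $q\in\mathbb{C}$ with $0<|q|<1$ and $m,n\in\mathbb{N}$. Then \[ \frac{1}{(q)_\infty}\sum_{k=0}^\infty\frac{q^{k^2}}{(q)_k (q)_{n-k}(q)_{m-k}} =\frac{1}{(q)_m(q)_n} \sum_{k=0}^{\infty}\frac{q^{k^2}(q)_{m+n+k}}{(q)_k (q)_{m+k}(q)_{n+k}}, \] and \[ \frac{1}{(q)_\infty}\sum_{k=0}^\infty\frac{q^{k^2+k}}{(q)_k (q)_{n-k}(q)_{m-k}} =\frac{1}{(q)_m(q)_n} \sum_{k=0}^{\infty}\frac{q^{k^2+k}(q)_{m+n+k+1}}{(q)_k (q)_{m+k+1}(q)_{n+k+1}}. \]
   Context: $(q)_n=(1-q)(1-q^2)\cdots(1-q^n)$ for $n\ge0$ (with $(q)_0=1$), $1/(q)_n=0$ for $n<0$, and $(q)_\infty=\prod_{i\ge1}(1-q^i)$. *)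

theory Defs
  imports "HOL-Analysis.Analysis"
begin

definition qpoch :: "complex \<Rightarrow> nat \<Rightarrow> complex" where
  "qpoch q n = (\<Prod>i=1..n. 1 - q ^ i)"

definition qpoch_inv :: "complex \<Rightarrow> int \<Rightarrow> complex" where
  "qpoch_inv q n = (if n < 0 then 0 else 1 / qpoch q (nat n))"

definition qpoch_inf :: "complex \<Rightarrow> complex" where
  "qpoch_inf q = (\<Prod>i. 1 - q ^ Suc i)"

end

theory Submission
  imports Defs
begin

text \<open>Generalise the Gaussian weight q^(k^2) to q^(k^2 + j k); the theorem is the case j = 0, 1.
  Multiplied by (q)_m (q)_n, the left-hand side becomes the finite sum
  B(m,n,j) = sum_k q^(k^2 + j k) (q)_k [m,k] [n,k] of q-binomial coefficients, and the q-Pascal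
  rules give B(m+1,n+1,j) = B(m,n+1,j) + q^(j+m+1) (1 - q^(n+1)) B(m,n,j+1), with B = 1 when m = 0 or
  n = 0. The series on the right-hand side satisfies the same recurrence termwise, and for m = 0 or
  n = 0 it reduces to sum_k q^(k^2 + j k) / ((q)_k (q)_(k+j)) = 1/(q)_inf. This Durfee-type identity is
  the limit N -> inf of its finite form sum_k q^(k^2 + j k) [N,k] / (q)_(k+j) = 1/(q)_(N+j), itself
  proved by induction on N with q-Pascal.\<close>

lemma qpoch_0 [simp]: "qpoch q 0 = 1"
  by (simp add: qpoch_def)

lemma qpoch_Suc: "qpoch q (Suc n) = qpoch q n * (1 - q ^ Suc n)"
  by (simp add: qpoch_def prod.nat_ivl_Suc')

lemma qpoch_eq_prod_lessThan: "qpoch q n = (\<Prod>i<n. 1 - q ^ Suc i)"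
  by (induction n) (simp_all add: qpoch_Suc lessThan_Suc mult.commute)

lemma qpoch_nonzero:
  assumes "norm q < 1"
  shows "qpoch q n \<noteq> 0"
proof -
  have "norm (q ^ Suc i) < 1" for i
    using assms by (simp add: norm_power power_less_one_iff del: power_Suc)
  then have "1 - q ^ Suc i \<noteq> 0" for i
    by (metis norm_one right_minus_eq order.irrefl)
  then show ?thesis
    by (simp add: qpoch_eq_prod_lessThan)
qed

lemma qpoch_inv_diff:
  "qpoch_inv q (int n - int k) = (if k \<le> n then 1 / qpoch q (n - k) else 0)"
  by (simp add: qpoch_inv_def of_nat_diff[symmetric] del: of_nat_diff)

definition qbinom :: "complex \<Rightarrow> nat \<Rightarrow> nat \<Rightarrow> complex" where
  "qbinom q n k = (if k \<le> n then qpoch q n / (qpoch q k * qpoch q (n - k)) else 0)"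

lemma qbinom_eq_0 [simp]: "n < k \<Longrightarrow> qbinom q n k = 0"
  by (simp add: qbinom_def)

definition qbinom_pair_sum :: "complex \<Rightarrow> nat \<Rightarrow> nat \<Rightarrow> nat \<Rightarrow> complex" where
  "qbinom_pair_sum q m n j = (\<Sum>k\<le>m. q ^ (k\<^sup>2 + j * k) * qpoch q k * qbinom q m k * qbinom q n k)"

definition durfee_term :: "complex \<Rightarrow> nat \<Rightarrow> nat \<Rightarrow> nat \<Rightarrow> nat \<Rightarrow> complex" where
  "durfee_term q m n j k = q ^ (k\<^sup>2 + j * k) * qpoch q (m + n + k + j)
     / (qpoch q k * qpoch q (m + k + j) * qpoch q (n + k + j))"

context
  fixes q :: complex
  assumes qpoch_nz: "\<And>n. qpoch q n \<noteq> 0"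
begin

lemma one_minus_power_Suc_nonzero: "1 - q ^ Suc n \<noteq> 0"
  using qpoch_nz[of "Suc n"] by (simp add: qpoch_Suc del: power_Suc)

lemma qbinom_0_right [simp]: "qbinom q n 0 = 1"
  using qpoch_nz by (simp add: qbinom_def)

lemma qbinom_same [simp]: "qbinom q n n = 1"
  using qpoch_nz by (simp add: qbinom_def)

lemma qpoch_inv_diff_eq_qbinom:
  "qpoch_inv q (int n - int k) = qpoch q k * qbinom q n k / qpoch q n"
  using qpoch_nz by (simp add: qpoch_inv_diff qbinom_def)

lemma qpoch_mult_qbinom_Suc:
  "qpoch q (Suc k) * qbinom q (Suc n) (Suc k) = (1 - q ^ Suc n) * (qpoch q k * qbinom q n k)"
  using qpoch_nz one_minus_power_Suc_nonzero[of k]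
  by (simp add: qbinom_def qpoch_Suc del: power_Suc)

lemma nat_less_eq_or_gap_cases:
  fixes n k :: nat
  obtains "n < k" | "k = n" | d where "n = k + Suc d"
  by (metis add_Suc_right less_imp_Suc_add linorder_neqE_nat)

text \<open>With n = k + d + 1, both q-Pascal rules become rational identities in a = q^(k+1) and b = q^(d+1).\<close>
lemma qbinom_Suc_Suc_expand:
  assumes "n = k + Suc d" and "a = q ^ Suc k" and "b = q ^ Suc d"
  shows "qbinom q (Suc n) (Suc k) = qpoch q n * (1 - a * b) / (qpoch q k * (1 - a) * (qpoch q d * (1 - b)))"
    and "qbinom q n (Suc k) = qpoch q n / (qpoch q k * (1 - a) * qpoch q d)"
    and "qbinom q n k = qpoch q n / (qpoch q k * (qpoch q d * (1 - b)))"
    and "q ^ (n - k) = b"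
proof -
  have "q ^ Suc n = a * b"
    unfolding assms power_add[symmetric] by simp
  then show "qbinom q (Suc n) (Suc k) = qpoch q n * (1 - a * b) / (qpoch q k * (1 - a) * (qpoch q d * (1 - b)))"
    by (simp add: qbinom_def assms qpoch_Suc del: power_Suc)
qed (simp_all add: qbinom_def assms qpoch_Suc del: power_Suc)

lemma qbinom_Suc_Suc:
  "qbinom q (Suc n) (Suc k) = q ^ Suc k * qbinom q n (Suc k) + qbinom q n k"
proof (cases n k rule: nat_less_eq_or_gap_cases)
  case (3 d)
  define a b where "a = q ^ Suc k" and "b = q ^ Suc d"
  have "1 - a \<noteq> 0" "1 - b \<noteq> 0"
    unfolding a_def b_def by (fact one_minus_power_Suc_nonzero)+
  with qpoch_nz show ?thesis
    unfolding qbinom_Suc_Suc_expand[OF 3 a_def b_def] a_def[symmetric]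
    by (simp add: divide_simps) (simp add: algebra_simps)
qed simp_all

lemma qbinom_Suc_Suc':
  "qbinom q (Suc n) (Suc k) = qbinom q n (Suc k) + q ^ (n - k) * qbinom q n k"
proof (cases n k rule: nat_less_eq_or_gap_cases)
  case (3 d)
  define a b where "a = q ^ Suc k" and "b = q ^ Suc d"
  have "1 - a \<noteq> 0" "1 - b \<noteq> 0"
    unfolding a_def b_def by (fact one_minus_power_Suc_nonzero)+
  with qpoch_nz show ?thesis
    unfolding qbinom_Suc_Suc_expand[OF 3 a_def b_def]
    by (simp add: divide_simps) (simp add: algebra_simps)
qed simp_all

lemma sum_qbinom_durfee:
  "(\<Sum>k\<le>N. q ^ (k\<^sup>2 + j * k) * qbinom q N k / qpoch q (k + j)) = 1 / qpoch q (N + j)"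
proof (induction N arbitrary: j)
  case 0
  show ?case by simp
next
  case (Suc N)
  define A where "A k = q ^ (k\<^sup>2 + Suc j * k) * qbinom q N k / qpoch q (k + j)" for k
  define B where "B k = q ^ ((Suc k)\<^sup>2 + j * Suc k) * qbinom q N k / qpoch q (Suc k + j)" for k
  have pascal: "q ^ ((Suc k)\<^sup>2 + j * Suc k) * qbinom q (Suc N) (Suc k) / qpoch q (Suc k + j)
      = A (Suc k) + B k" for k
  proof -
    have exp: "q ^ ((Suc k)\<^sup>2 + Suc j * Suc k) = q ^ ((Suc k)\<^sup>2 + j * Suc k) * q ^ Suc k"
      by (simp add: power_add[symmetric] add_ac del: power_Suc)
    show ?thesis
      unfolding A_def B_def qbinom_Suc_Suc exp by (simp add: ring_distribs add_divide_distrib mult_ac)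
  qed
  have merge: "A k + B k = q ^ (k\<^sup>2 + Suc j * k) * qbinom q N k / qpoch q (k + Suc j)" for k
  proof -
    define c where "c = q ^ Suc (k + j)"
    have "q ^ ((Suc k)\<^sup>2 + j * Suc k) = q ^ (k\<^sup>2 + Suc j * k) * c"
      by (simp add: c_def power_add[symmetric] power2_eq_square algebra_simps del: power_Suc)
    moreover have "qpoch q (Suc k + j) = qpoch q (k + j) * (1 - c)"
      "qpoch q (k + Suc j) = qpoch q (k + j) * (1 - c)"
      by (simp_all add: c_def qpoch_Suc del: power_Suc)
    moreover have "1 - c \<noteq> 0"
      unfolding c_def by (fact one_minus_power_Suc_nonzero)
    ultimately show ?thesis
      using qpoch_nz[of "k + j"] by (simp add: A_def B_def divide_simps) (simp add: algebra_simps)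
  qed
  have "(\<Sum>k\<le>Suc N. q ^ (k\<^sup>2 + j * k) * qbinom q (Suc N) k / qpoch q (k + j))
      = A 0 + (\<Sum>k\<le>N. A (Suc k)) + (\<Sum>k\<le>N. B k)"
    unfolding sum.atMost_Suc_shift pascal sum.distrib by (simp add: A_def)
  also have "A 0 + (\<Sum>k\<le>N. A (Suc k)) = (\<Sum>k\<le>N. A k)"
    by (simp only: sum.atMost_Suc_shift[symmetric] sum.atMost_Suc) (simp add: A_def)
  also have "(\<Sum>k\<le>N. A k) + (\<Sum>k\<le>N. B k)
      = (\<Sum>k\<le>N. q ^ (k\<^sup>2 + Suc j * k) * qbinom q N k / qpoch q (k + Suc j))"
    by (simp add: sum.distrib[symmetric] merge)
  also have "\<dots> = 1 / qpoch q (Suc N + j)"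
    using Suc.IH[of "Suc j"] by simp
  finally show ?case .
qed

lemma qbinom_pair_sum_0_left [simp]: "qbinom_pair_sum q 0 n j = 1"
  by (simp add: qbinom_pair_sum_def)

lemma qbinom_pair_sum_0_right [simp]: "qbinom_pair_sum q m 0 j = 1"
proof -
  have "qbinom_pair_sum q m 0 j = (\<Sum>k\<in>{0}. q ^ (k\<^sup>2 + j * k) * qpoch q k * qbinom q m k * qbinom q 0 k)"
    unfolding qbinom_pair_sum_def by (rule sum.mono_neutral_right) auto
  then show ?thesis
    using qpoch_nz by (simp add: qbinom_def)
qed

lemma qbinom_pair_sum_Suc_Suc:
  "qbinom_pair_sum q (Suc m) (Suc n) j
     = qbinom_pair_sum q m (Suc n) j + q ^ (j + m + 1) * (1 - q ^ Suc n) * qbinom_pair_sum q m n (Suc j)"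
proof -
  define T where "T m n j k = q ^ (k\<^sup>2 + j * k) * qpoch q k * qbinom q m k * qbinom q n k" for m n j k
  define c where "c = q ^ (j + m + 1) * (1 - q ^ Suc n)"
  have pascal: "T (Suc m) (Suc n) j (Suc i) = T m (Suc n) j (Suc i) + c * T m n (Suc j) i"
    if "i \<le> m" for i
  proof -
    have "(Suc i)\<^sup>2 + j * Suc i + (m - i) = (i\<^sup>2 + Suc j * i) + (j + m + 1)"
      using that by (simp add: power2_eq_square algebra_simps)
    then have exp: "q ^ ((Suc i)\<^sup>2 + j * Suc i) * q ^ (m - i) = q ^ (i\<^sup>2 + Suc j * i) * q ^ (j + m + 1)"
      by (metis power_add)
    have "T (Suc m) (Suc n) j (Suc i) = T m (Suc n) j (Suc i)
        + q ^ ((Suc i)\<^sup>2 + j * Suc i) * q ^ (m - i) * qbinom q m i * (qpoch q (Suc i) * qbinom q (Suc n) (Suc i))"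
      unfolding T_def qbinom_Suc_Suc' by (simp add: algebra_simps)
    also have "\<dots> = T m (Suc n) j (Suc i) + c * T m n (Suc j) i"
      unfolding qpoch_mult_qbinom_Suc exp by (simp add: T_def c_def algebra_simps)
    finally show ?thesis .
  qed
  have "qbinom_pair_sum q (Suc m) (Suc n) j = T (Suc m) (Suc n) j 0 + (\<Sum>i\<le>m. T (Suc m) (Suc n) j (Suc i))"
    unfolding qbinom_pair_sum_def T_def by (rule sum.atMost_Suc_shift)
  also have "(\<Sum>i\<le>m. T (Suc m) (Suc n) j (Suc i)) = (\<Sum>i\<le>m. T m (Suc n) j (Suc i) + c * T m n (Suc j) i)"
    using pascal by (intro sum.cong) auto
  also have "\<dots> = (\<Sum>i\<le>m. T m (Suc n) j (Suc i)) + c * qbinom_pair_sum q m n (Suc j)"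
    by (simp add: sum.distrib sum_distrib_left qbinom_pair_sum_def T_def)
  also have "T (Suc m) (Suc n) j 0 = T m (Suc n) j 0"
    by (simp add: T_def)
  also have "T m (Suc n) j 0 + ((\<Sum>i\<le>m. T m (Suc n) j (Suc i)) + c * qbinom_pair_sum q m n (Suc j))
      = qbinom_pair_sum q m (Suc n) j + c * qbinom_pair_sum q m n (Suc j)"
    unfolding qbinom_pair_sum_def
    by (simp only: add.assoc[symmetric] sum.atMost_Suc_shift[symmetric] sum.atMost_Suc) (simp add: T_def)
  finally show ?thesis
    by (simp add: c_def)
qed

lemma durfee_term_0_left: "durfee_term q 0 n j k = q ^ (k\<^sup>2 + j * k) / (qpoch q k * qpoch q (k + j))"
  using qpoch_nz by (simp add: durfee_term_def ac_simps)

lemma durfee_term_0_right: "durfee_term q m 0 j k = q ^ (k\<^sup>2 + j * k) / (qpoch q k * qpoch q (k + j))"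
  using qpoch_nz by (simp add: durfee_term_def ac_simps)

lemma durfee_term_Suc_Suc:
  "durfee_term q (Suc m) (Suc n) j k
     = durfee_term q m (Suc n) j k + q ^ (j + m + 1) * (1 - q ^ Suc n) * durfee_term q m n (Suc j) k"
proof -
  define E P M N e c where "E = q ^ (k\<^sup>2 + j * k)" and "P = qpoch q (Suc (m + n + k + j))"
    and "M = qpoch q (m + k + j)" and "N = qpoch q (Suc (n + k + j))"
    and "e = q ^ Suc (m + k + j)" and "c = q ^ Suc n"
  have "q ^ Suc (Suc (m + n + k + j)) = e * c"
    by (simp add: e_def c_def power_add[symmetric] add_ac del: power_Suc)
  then have lhs: "durfee_term q (Suc m) (Suc n) j k = E * (P * (1 - e * c)) / (qpoch q k * (M * (1 - e)) * N)"
    by (simp add: durfee_term_def E_def P_def M_def N_def e_def qpoch_Suc[of q "Suc _"]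
        qpoch_Suc[of q "m + k + j"] del: power_Suc)
  have "q ^ (j + m + 1) * q ^ (k\<^sup>2 + Suc j * k) = E * e"
    by (simp add: E_def e_def power_add[symmetric] algebra_simps del: power_Suc)
  then have rhs2: "q ^ (j + m + 1) * (1 - c) * durfee_term q m n (Suc j) k
      = E * e * (1 - c) * P / (qpoch q k * (M * (1 - e)) * N)"
    by (simp add: durfee_term_def P_def M_def N_def e_def c_def qpoch_Suc[of q "m + k + j"] mult_ac
        del: power_Suc)
  have rhs1: "durfee_term q m (Suc n) j k = E * P / (qpoch q k * M * N)"
    by (simp add: durfee_term_def E_def P_def M_def N_def)
  have "qpoch q k \<noteq> 0" "M \<noteq> 0" "N \<noteq> 0" "1 - e \<noteq> 0"
    using qpoch_nz one_minus_power_Suc_nonzero by (simp_all add: M_def N_def e_def)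
  then show ?thesis
    unfolding lhs rhs1 c_def[symmetric] rhs2 by (simp add: divide_simps) (simp add: algebra_simps)
qed

lemma suminf_qpoch_inv_diff_eq_qbinom_pair_sum:
  "(\<Sum>k. q ^ (k\<^sup>2 + j * k) / qpoch q k * qpoch_inv q (int n - int k) * qpoch_inv q (int m - int k))
     = qbinom_pair_sum q m n j / (qpoch q m * qpoch q n)"
proof -
  have "(\<Sum>k. q ^ (k\<^sup>2 + j * k) / qpoch q k * qpoch_inv q (int n - int k) * qpoch_inv q (int m - int k))
      = (\<Sum>k\<le>m. q ^ (k\<^sup>2 + j * k) / qpoch q k * qpoch_inv q (int n - int k) * qpoch_inv q (int m - int k))"
    by (rule suminf_finite) (auto simp: qpoch_inv_diff)
  also have "\<dots> = qbinom_pair_sum q m n j / (qpoch q m * qpoch q n)"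
    unfolding qbinom_pair_sum_def sum_divide_distrib qpoch_inv_diff_eq_qbinom
    using qpoch_nz by (intro sum.cong refl) (simp add: field_simps)
  finally show ?thesis .
qed

end

lemma eq_if_same_recurrence:
  fixes F G :: "nat \<Rightarrow> nat \<Rightarrow> nat \<Rightarrow> 'a::semiring"
  assumes F_rec: "\<And>m n j. F (Suc m) (Suc n) j = F m (Suc n) j + c m n j * F m n (Suc j)"
    and G_rec: "\<And>m n j. G (Suc m) (Suc n) j = G m (Suc n) j + c m n j * G m n (Suc j)"
    and left: "\<And>n j. F 0 n j = G 0 n j"
    and right: "\<And>m j. F m 0 j = G m 0 j"
  shows "F m n j = G m n j"
proof (induction m arbitrary: n j)
  case (Suc m)
  then show ?case
    by (cases n) (simp_all add: right F_rec G_rec)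
qed (fact left)

lemma norm_power_square_le:
  fixes q :: "'a::real_normed_algebra_1"
  assumes "norm q \<le> 1"
  shows "norm (q ^ (k\<^sup>2 + j * k)) \<le> norm q ^ k"
proof -
  have "k \<le> k\<^sup>2 + j * k"
    by (cases k) (auto simp: power2_eq_square)
  then have "norm q ^ (k\<^sup>2 + j * k) \<le> norm q ^ k"
    using assms by (intro power_decreasing) auto
  then show ?thesis
    using norm_power_ineq order.trans by blast
qed

context
  fixes q :: complex
  assumes q_lt_1: "norm q < 1"
begin

lemma convergent_prod_one_minus_power: "convergent_prod (\<lambda>i. 1 - q ^ Suc i)"
proof (intro abs_convergent_prod_imp_convergent_prod summable_imp_abs_convergent_prod)
  show "summable (\<lambda>i. norm (1 - q ^ Suc i - 1))"
    using summable_ignore_initial_segment[OF summable_geometric[of "norm q"], of 1] q_lt_1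
    by (simp add: norm_power del: power_Suc)
qed

lemma qpoch_tendsto: "qpoch q \<longlonglongrightarrow> qpoch_inf q"
proof -
  have "(\<lambda>n. \<Prod>i\<le>n. 1 - q ^ Suc i) \<longlonglongrightarrow> qpoch_inf q"
    unfolding qpoch_inf_def by (rule convergent_prod_LIMSEQ[OF convergent_prod_one_minus_power])
  then have "(\<lambda>n. qpoch q (Suc n)) \<longlonglongrightarrow> qpoch_inf q"
    by (simp add: qpoch_eq_prod_lessThan lessThan_Suc_atMost)
  then show ?thesis
    by (rule LIMSEQ_imp_Suc)
qed

lemma qpoch_inf_nonzero: "qpoch_inf q \<noteq> 0"
proof -
  have "1 - q ^ Suc i \<noteq> 0" for i
    using qpoch_nonzero[OF q_lt_1] by (rule one_minus_power_Suc_nonzero)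
  then show ?thesis
    unfolding qpoch_inf_def by (rule prodinf_nonzero[OF convergent_prod_one_minus_power])
qed

lemma qpoch_inverse_tendsto: "(\<lambda>n. 1 / qpoch q n) \<longlonglongrightarrow> 1 / qpoch_inf q"
  by (intro tendsto_intros qpoch_tendsto qpoch_inf_nonzero)

lemma qbinom_tendsto: "(\<lambda>n. qbinom q n k) \<longlonglongrightarrow> 1 / qpoch q k"
proof (rule LIMSEQ_offset[where k = k])
  have "(\<lambda>n. qpoch q (n + k)) \<longlonglongrightarrow> qpoch_inf q"
    by (rule LIMSEQ_ignore_initial_segment[OF qpoch_tendsto])
  then have "(\<lambda>n. qpoch q (n + k) * (1 / qpoch q n) / qpoch q k)
      \<longlonglongrightarrow> qpoch_inf q * (1 / qpoch_inf q) / qpoch q k"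
    using qpoch_nonzero[OF q_lt_1]
    by (intro tendsto_divide tendsto_mult qpoch_inverse_tendsto tendsto_const) auto
  then show "(\<lambda>n. qbinom q (n + k) k) \<longlonglongrightarrow> 1 / qpoch q k"
    using qpoch_inf_nonzero by (simp add: qbinom_def mult.commute)
qed

lemma qpoch_bounded: obtains U where "\<And>n. norm (qpoch q n) \<le> U"
  using convergent_imp_Bseq[OF convergentI[OF qpoch_tendsto]] that by (auto simp: Bseq_def)

lemma inverse_qpoch_bounded: obtains V where "\<And>n. norm (1 / qpoch q n) \<le> V"
  using convergent_imp_Bseq[OF convergentI[OF qpoch_inverse_tendsto]] that by (auto simp: Bseq_def)

lemma qbinom_bounded: obtains B where "\<And>n k. norm (qbinom q n k) \<le> B"
proof -
  obtain U V where U: "\<And>n. norm (qpoch q n) \<le> U" and V: "\<And>n. norm (1 / qpoch q n) \<le> V"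
    using qpoch_bounded inverse_qpoch_bounded by metis
  have "0 \<le> U" "0 \<le> V"
    using order.trans[OF norm_ge_zero U] order.trans[OF norm_ge_zero V] by auto
  have "norm (qbinom q n k) \<le> U * V * V" for n k
  proof (cases "k \<le> n")
    case True
    have "norm (qbinom q n k) = norm (qpoch q n) * norm (1 / qpoch q k) * norm (1 / qpoch q (n - k))"
      using True by (simp add: qbinom_def norm_divide norm_mult)
    also have "\<dots> \<le> U * V * V"
      by (intro mult_mono U V) (simp_all add: \<open>0 \<le> U\<close> \<open>0 \<le> V\<close>)
    finally show ?thesis .
  qed (simp add: \<open>0 \<le> U\<close> \<open>0 \<le> V\<close>)
  then show ?thesis
    using that by blast
qed

text \<open>Tannery's theorem applies since the terms are dominated by a multiple of norm q ^ k.\<close>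
lemma durfee_sums: "(\<lambda>k. q ^ (k\<^sup>2 + j * k) / (qpoch q k * qpoch q (k + j))) sums (1 / qpoch_inf q)"
proof -
  define a where "a k N = q ^ (k\<^sup>2 + j * k) * qbinom q N k / qpoch q (k + j)" for k N
  define b where "b k = q ^ (k\<^sup>2 + j * k) / (qpoch q k * qpoch q (k + j))" for k
  obtain B where B: "\<And>n k. norm (qbinom q n k) \<le> B"
    using qbinom_bounded by blast
  obtain V where V: "\<And>n. norm (1 / qpoch q n) \<le> V"
    using inverse_qpoch_bounded by blast
  have "0 \<le> B"
    using order.trans[OF norm_ge_zero B] by blast
  have lim: "(\<lambda>N. a k N) \<longlonglongrightarrow> b k" for k
  proof -
    have "(\<lambda>N. q ^ (k\<^sup>2 + j * k) * qbinom q N k / qpoch q (k + j))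
        \<longlonglongrightarrow> q ^ (k\<^sup>2 + j * k) * (1 / qpoch q k) / qpoch q (k + j)"
      using qpoch_nonzero[OF q_lt_1] by (intro tendsto_intros qbinom_tendsto) auto
    then show ?thesis
      by (simp add: a_def b_def)
  qed
  have bound: "norm (a k N) \<le> norm q ^ k * (B * V)" for k N
  proof -
    have "norm (a k N) = norm (q ^ (k\<^sup>2 + j * k)) * (norm (qbinom q N k) * norm (1 / qpoch q (k + j)))"
      by (simp add: a_def norm_mult norm_divide)
    also have "\<dots> \<le> norm q ^ k * (B * V)"
      using q_lt_1 \<open>0 \<le> B\<close> by (intro mult_mono B V norm_power_square_le) auto
    finally show ?thesis .
  qed
  have "summable (\<lambda>k. norm q ^ k * (B * V))"
    using q_lt_1 by (intro summable_mult2 summable_geometric) auto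
  then have "summable (\<lambda>k. norm (b k))" and tannery: "(\<lambda>N. \<Sum>k. a k N) \<longlonglongrightarrow> (\<Sum>k. b k)"
    using tannerys_theorem[of "\<lambda>k N. a k N" b sequentially "\<lambda>k. norm q ^ k * (B * V)"] lim bound
    by (auto intro: always_eventually)
  have "(\<Sum>k. a k N) = 1 / qpoch q (N + j)" for N
  proof -
    have "(\<Sum>k. a k N) = (\<Sum>k\<le>N. a k N)"
      by (rule suminf_finite) (auto simp: a_def)
    then show ?thesis
      by (simp add: a_def sum_qbinom_durfee[OF qpoch_nonzero[OF q_lt_1]])
  qed
  then have "(\<lambda>N. \<Sum>k. a k N) \<longlonglongrightarrow> 1 / qpoch_inf q"
    using LIMSEQ_ignore_initial_segment[OF qpoch_inverse_tendsto, of j] by simp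
  with tannery have "(\<Sum>k. b k) = 1 / qpoch_inf q"
    by (rule LIMSEQ_unique)
  moreover have "summable b"
    using \<open>summable (\<lambda>k. norm (b k))\<close> by (rule summable_norm_cancel)
  ultimately show ?thesis
    unfolding b_def[symmetric] using summable_sums by fastforce
qed

lemma summable_durfee_term: "summable (durfee_term q m n j)"
proof -
  obtain U V where U: "\<And>n. norm (qpoch q n) \<le> U" and V: "\<And>n. norm (1 / qpoch q n) \<le> V"
    using qpoch_bounded inverse_qpoch_bounded by metis
  have "0 \<le> U" "0 \<le> V"
    using order.trans[OF norm_ge_zero U] order.trans[OF norm_ge_zero V] by auto
  have bound: "norm (durfee_term q m n j k) \<le> norm q ^ k * (U * V * V * V)" for k
  proof -
    have "norm (durfee_term q m n j k) = norm (q ^ (k\<^sup>2 + j * k)) * (norm (qpoch q (m + n + k + j))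
        * norm (1 / qpoch q k) * norm (1 / qpoch q (m + k + j)) * norm (1 / qpoch q (n + k + j)))"
      by (simp add: durfee_term_def norm_mult norm_divide)
    also have "\<dots> \<le> norm q ^ k * (U * V * V * V)"
      using q_lt_1 \<open>0 \<le> U\<close> \<open>0 \<le> V\<close> by (intro mult_mono U V norm_power_square_le) auto
    finally show ?thesis .
  qed
  have "summable (\<lambda>k. norm q ^ k * (U * V * V * V))"
    using q_lt_1 by (intro summable_mult2 summable_geometric) auto
  then show ?thesis
    by (rule summable_comparison_test[rotated]) (use bound in blast)
qed

lemma suminf_durfee_term: "(\<Sum>k. durfee_term q m n j k) = qbinom_pair_sum q m n j / qpoch_inf q"
proof (rule eq_if_same_recurrence[where c = "\<lambda>m n j. q ^ (j + m + 1) * (1 - q ^ Suc n)"])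
  have qpoch_nz: "\<And>n. qpoch q n \<noteq> 0"
    by (rule qpoch_nonzero[OF q_lt_1])
  show "(\<Sum>k. durfee_term q (Suc m) (Suc n) j k)
      = (\<Sum>k. durfee_term q m (Suc n) j k) + q ^ (j + m + 1) * (1 - q ^ Suc n) * (\<Sum>k. durfee_term q m n (Suc j) k)"
    for m n j
    unfolding durfee_term_Suc_Suc[OF qpoch_nz]
    by (rule sums_unique[symmetric]) (intro sums_add sums_mult summable_sums summable_durfee_term)
  show "qbinom_pair_sum q (Suc m) (Suc n) j / qpoch_inf q = qbinom_pair_sum q m (Suc n) j / qpoch_inf q
      + q ^ (j + m + 1) * (1 - q ^ Suc n) * (qbinom_pair_sum q m n (Suc j) / qpoch_inf q)" for m n j
    unfolding qbinom_pair_sum_Suc_Suc[OF qpoch_nz] by (simp add: add_divide_distrib)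
  show "(\<Sum>k. durfee_term q 0 n j k) = qbinom_pair_sum q 0 n j / qpoch_inf q" for n j
    unfolding durfee_term_0_left[OF qpoch_nz] qbinom_pair_sum_0_left[OF qpoch_nz]
    using sums_unique[OF durfee_sums] by simp
  show "(\<Sum>k. durfee_term q m 0 j k) = qbinom_pair_sum q m 0 j / qpoch_inf q" for m j
    unfolding durfee_term_0_right[OF qpoch_nz] qbinom_pair_sum_0_right[OF qpoch_nz]
    using sums_unique[OF durfee_sums] by simp
qed

theorem durfee_identity:
  "1 / qpoch_inf q * (\<Sum>k. q ^ (k\<^sup>2 + j * k) / qpoch q k
      * qpoch_inv q (int n - int k) * qpoch_inv q (int m - int k))
   = 1 / (qpoch q m * qpoch q n) * (\<Sum>k. durfee_term q m n j k)"
  unfolding suminf_qpoch_inv_diff_eq_qbinom_pair_sum[OF qpoch_nonzero[OF q_lt_1]] suminf_durfee_term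
  by simp

end

theorem mainTheorem14:
  fixes q :: complex and m n :: nat
  assumes "0 < norm q" and "norm q < 1"
  shows "((1 / qpoch_inf q) * (\<Sum>k. q ^ (k^2) / qpoch q k
            * qpoch_inv q (int n - int k) * qpoch_inv q (int m - int k))
         = (1 / (qpoch q m * qpoch q n)) *
           (\<Sum>k. q ^ (k^2) * qpoch q (m + n + k) / (qpoch q k * qpoch q (m + k) * qpoch q (n + k))))
         \<and> ((1 / qpoch_inf q) * (\<Sum>k. q ^ (k^2 + k) / qpoch q k
            * qpoch_inv q (int n - int k) * qpoch_inv q (int m - int k))
         = (1 / (qpoch q m * qpoch q n)) *
           (\<Sum>k. q ^ (k^2 + k) * qpoch q (m + n + k + 1) / (qpoch q k * qpoch q (m + k + 1) * qpoch q (n + k + 1))))"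
  using durfee_identity[OF assms(2), of 0 n m] durfee_identity[OF assms(2), of 1 n m]
  by (simp add: durfee_term_def)

end
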